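(* For every $i\in\{1,2,3\}$, the class $\mathrm{FDir}(i)$ of D$i$-directable fuzzy automata and the class $\mathrm{CFDir}(i)$ of complete D$i$-directable fuzzy automata are closed under taking subautomata and homomorphic images. Moreover, the classes $\mathrm{CFDir}(2)$ and $\mathrm{CFDir}(3)$ are closed under finite direct products.
   Context: A fuzzy automaton is a triple $\mathcal F=(A,X,f)$ with $A$ a finite nonempty set of states, $X$ a finite nonempty alphabet, and $f:A\times X\times A\to[0,1]$, extended to words by $f^*(a,\varepsilon,a)=1$, $f^*(a,\varepsilon,b)=0$ ($b\neq a$), $f^*(a,vx,b)=\max_{c\in A}\min\{f^*(a,v,c),f(c,x,b)\}$. Let $\mathcal F(a,w)=\{b\in A\mid f^*(a,w,b)>0\}$. $\mathcal F$ is complete if $\mathcal F(a,x)\neq\emptyset$ for all $a\in A$, $x\in X$. A word $w\in X^*$ is D1-directing if there is $c\in A$ with $\mathcal F(a,w)=\{c\}$ for all $a\in A$; D2-directing if $\mathcal F(a,w)=\mathcal F(b,w)$ for all $a,b\in A$; D3-directing if there is $c\in A$ with $c\in\mathcal F(a,w)$ for all $a\in A$; $\mathcal F$ is D$i$-directable if it has a D$i$-directing word. $\mathcal G=(B,X,g)$ is a subautomaton of $\mathcal F$ if $B\subseteq A$, $\mathcal F(b,x)\subseteq B$ for all $b\in B$, $x\in X$, and $g(b,x,b')=f(b,x,b')$ for $b,b'\in B$. A surjective map $\varphi:A\to B$ is an epimorphism $\mathcal F\to\mathcal G$ if $g(\varphi(a),x,b)=\max\{f(a,x,a')\mid a'\in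 A,\ \varphi(a')=b\}$ for all $a\in A$, $b\in B$, $x\in X$ (maximum of the empty set being $0$); $\mathcal G$ is then a homomorphic image of $\mathcal F$. The direct product of $\mathcal F$ and $\mathcal G=(B,X,g)$ is $\mathcal F\times\mathcal G=(A\times B,X,h)$ with $h((a,b),x,(a',b'))=\min\{f(a,x,a'),g(b,x,b')\}$; finite direct products are obtained (up to isomorphism) by iterating this binary product. *)

theory Defs
  imports Complex_Main
begin

text \<open>A fuzzy automaton (A, X, f): A finite nonempty set of states, X finite nonempty
  alphabet, f : A \<times> X \<times> A \<rightarrow> [0,1] (values of f outside A \<times> X \<times> A are irrelevant).\<close>
definition fuzzy_automaton :: "'a set \<Rightarrow> 'x set \<Rightarrow> ('a \<Rightarrow> 'x \<Rightarrow> 'a \<Rightarrow> real) \<Rightarrow> bool" where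
  "fuzzy_automaton A X f \<longleftrightarrow> finite A \<and> A \<noteq> {} \<and> finite X \<and> X \<noteq> {} \<and>
     (\<forall>a\<in>A. \<forall>x\<in>X. \<forall>b\<in>A. 0 \<le> f a x b \<and> f a x b \<le> 1)"

fun fstar_rev :: "'a set \<Rightarrow> ('a \<Rightarrow> 'x \<Rightarrow> 'a \<Rightarrow> real) \<Rightarrow> 'a \<Rightarrow> 'x list \<Rightarrow> 'a \<Rightarrow> real" where
  "fstar_rev A f a [] b = (if a = b then 1 else 0)"
| "fstar_rev A f a (x # rv) b = Max ((\<lambda>c. min (fstar_rev A f a rv c) (f c x b)) ` A)"

definition fstar :: "'a set \<Rightarrow> ('a \<Rightarrow> 'x \<Rightarrow> 'a \<Rightarrow> real) \<Rightarrow> 'a \<Rightarrow> 'x list \<Rightarrow> 'a \<Rightarrow> real" where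
  "fstar A f a w b = fstar_rev A f a (rev w) b"

lemma fstar_Nil: "fstar A f a [] b = (if a = b then 1 else 0)"
  by (simp add: fstar_def)

lemma fstar_snoc: "fstar A f a (v @ [x]) b = Max ((\<lambda>c. min (fstar A f a v c) (f c x b)) ` A)"
  by (simp add: fstar_def)

definition reach :: "'a set \<Rightarrow> ('a \<Rightarrow> 'x \<Rightarrow> 'a \<Rightarrow> real) \<Rightarrow> 'a \<Rightarrow> 'x list \<Rightarrow> 'a set" where
  "reach A f a w = {b \<in> A. fstar A f a w b > 0}"

definition complete_fa :: "'a set \<Rightarrow> 'x set \<Rightarrow> ('a \<Rightarrow> 'x \<Rightarrow> 'a \<Rightarrow> real) \<Rightarrow> bool" where
  "complete_fa A X f \<longleftrightarrow> (\<forall>a\<in>A. \<forall>x\<in>X. reach A f a [x] \<noteq> {})"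

definition D1_directing :: "'a set \<Rightarrow> ('a \<Rightarrow> 'x \<Rightarrow> 'a \<Rightarrow> real) \<Rightarrow> 'x list \<Rightarrow> bool" where
  "D1_directing A f w \<longleftrightarrow> (\<exists>c\<in>A. \<forall>a\<in>A. reach A f a w = {c})"

definition D2_directing :: "'a set \<Rightarrow> ('a \<Rightarrow> 'x \<Rightarrow> 'a \<Rightarrow> real) \<Rightarrow> 'x list \<Rightarrow> bool" where
  "D2_directing A f w \<longleftrightarrow> (\<forall>a\<in>A. \<forall>b\<in>A. reach A f a w = reach A f b w)"

definition D3_directing :: "'a set \<Rightarrow> ('a \<Rightarrow> 'x \<Rightarrow> 'a \<Rightarrow> real) \<Rightarrow> 'x list \<Rightarrow> bool" where
  "D3_directing A f w \<longleftrightarrow> (\<exists>c\<in>A. \<forall>a\<in>A. c \<in> reach A f a w)"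

definition directing :: "nat \<Rightarrow> 'a set \<Rightarrow> ('a \<Rightarrow> 'x \<Rightarrow> 'a \<Rightarrow> real) \<Rightarrow> 'x list \<Rightarrow> bool" where
  "directing i A f w \<longleftrightarrow>
     (if i = 1 then D1_directing A f w else if i = 2 then D2_directing A f w
      else if i = 3 then D3_directing A f w else False)"

definition directable :: "nat \<Rightarrow> 'a set \<Rightarrow> 'x set \<Rightarrow> ('a \<Rightarrow> 'x \<Rightarrow> 'a \<Rightarrow> real) \<Rightarrow> bool" where
  "directable i A X f \<longleftrightarrow> (\<exists>w \<in> lists X. directing i A f w)"

definition FDir :: "nat \<Rightarrow> 'a set \<Rightarrow> 'x set \<Rightarrow> ('a \<Rightarrow> 'x \<Rightarrow> 'a \<Rightarrow> real) \<Rightarrow> bool" where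
  "FDir i A X f \<longleftrightarrow> fuzzy_automaton A X f \<and> directable i A X f"

definition CFDir :: "nat \<Rightarrow> 'a set \<Rightarrow> 'x set \<Rightarrow> ('a \<Rightarrow> 'x \<Rightarrow> 'a \<Rightarrow> real) \<Rightarrow> bool" where
  "CFDir i A X f \<longleftrightarrow> fuzzy_automaton A X f \<and> complete_fa A X f \<and> directable i A X f"

text \<open>(B,X,g) is a subautomaton of (A,X,f) (B nonempty, as (B,X,g) is a fuzzy automaton).\<close>
definition subautomaton :: "'a set \<Rightarrow> ('a \<Rightarrow> 'x \<Rightarrow> 'a \<Rightarrow> real) \<Rightarrow> 'a set \<Rightarrow> 'x set \<Rightarrow> ('a \<Rightarrow> 'x \<Rightarrow> 'a \<Rightarrow> real) \<Rightarrow> bool" where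
  "subautomaton B g A X f \<longleftrightarrow> B \<noteq> {} \<and> B \<subseteq> A \<and>
     (\<forall>b\<in>B. \<forall>x\<in>X. reach A f b [x] \<subseteq> B) \<and>
     (\<forall>b\<in>B. \<forall>x\<in>X. \<forall>b'\<in>B. g b x b' = f b x b')"

definition epimorphism :: "('a \<Rightarrow> 'b) \<Rightarrow> 'a set \<Rightarrow> 'x set \<Rightarrow> ('a \<Rightarrow> 'x \<Rightarrow> 'a \<Rightarrow> real) \<Rightarrow> 'b set \<Rightarrow> ('b \<Rightarrow> 'x \<Rightarrow> 'b \<Rightarrow> real) \<Rightarrow> bool" where
  "epimorphism \<phi> A X f B g \<longleftrightarrow> \<phi> ` A = B \<and>
     (\<forall>a\<in>A. \<forall>b\<in>B. \<forall>x\<in>X.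
        g (\<phi> a) x b = (let S = {f a x a' | a'. a' \<in> A \<and> \<phi> a' = b} in if S = {} then 0 else Max S))"

definition homomorphic_image :: "'b set \<Rightarrow> ('b \<Rightarrow> 'x \<Rightarrow> 'b \<Rightarrow> real) \<Rightarrow> 'a set \<Rightarrow> 'x set \<Rightarrow> ('a \<Rightarrow> 'x \<Rightarrow> 'a \<Rightarrow> real) \<Rightarrow> bool" where
  "homomorphic_image B g A X f \<longleftrightarrow> (\<exists>\<phi>. epimorphism \<phi> A X f B g)"

definition prod_trans :: "('a \<Rightarrow> 'x \<Rightarrow> 'a \<Rightarrow> real) \<Rightarrow> ('b \<Rightarrow> 'x \<Rightarrow> 'b \<Rightarrow> real) \<Rightarrow> ('a \<times> 'b) \<Rightarrow> 'x \<Rightarrow> ('a \<times> 'b) \<Rightarrow> real" where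
  "prod_trans f g p x q = min (f (fst p) x (fst q)) (g (snd p) x (snd q))"

end

theory Submission
  imports Defs
begin

text \<open>Everything is read off the reachable sets \<open>reach A f a w\<close>. They are unchanged when passing to a
  subautomaton, are mapped pointwise by an epimorphism, and are cartesian products in a direct
  product; the first two facts transport directing words and completeness. For products, in a
  complete automaton the properties D2 and D3 survive padding a directing word by arbitrary words
  on both sides, so if \<open>w\<^sub>1\<close> directs the first factor and \<open>w\<^sub>2\<close> the second, then \<open>w\<^sub>1 w\<^sub>2\<close>
  directs both factors and therefore their product.\<close>

lemma fuzzy_automaton_finite:
  assumes "fuzzy_automaton A X f"
  shows "finite A" "A \<noteq> {}"
  using assms by (auto simp: fuzzy_automaton_def)

lemma reach_subset: "reach A f a w \<subseteq> A"
  by (auto simp: reach_def)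

lemma reach_Nil: "a \<in> A \<Longrightarrow> reach A f a [] = {a}"
  by (auto simp: reach_def fstar_Nil)

lemma reach_snoc:
  assumes "finite A" "A \<noteq> {}"
  shows "reach A f a (v @ [x]) = (\<Union>c\<in>reach A f a v. {b\<in>A. f c x b > 0})"
proof -
  have "0 < Max ((\<lambda>c. min (fstar A f a v c) (f c x b)) ` A) \<longleftrightarrow>
      (\<exists>c\<in>A. 0 < fstar A f a v c \<and> 0 < f c x b)" for b
    using assms by (simp add: Max_gr_iff)
  then show ?thesis
    by (auto simp: reach_def fstar_snoc)
qed

lemma reach_single:
  assumes "finite A" "A \<noteq> {}" "a \<in> A"
  shows "reach A f a [x] = {b\<in>A. f a x b > 0}"
  using reach_snoc[OF assms(1,2), of f a "[]" x] by (simp add: reach_Nil[OF assms(3)])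

lemma reach_append:
  assumes "finite A" "A \<noteq> {}"
  shows "reach A f a (u @ v) = (\<Union>c\<in>reach A f a u. reach A f c v)"
proof (induction v rule: rev_induct)
  case Nil
  have "reach A f c [] = {c}" if "c \<in> reach A f a u" for c
    using that reach_subset[of A f a u] by (auto intro!: reach_Nil)
  then show ?case by auto
next
  case (snoc x v)
  then show ?case
    using reach_snoc[OF assms, of f _ "u @ v" x] reach_snoc[OF assms, of f _ v x] by auto
qed

lemma reach_nonempty:
  assumes "fuzzy_automaton A X f" "complete_fa A X f" "a \<in> A" "w \<in> lists X"
  shows "reach A f a w \<noteq> {}"
  using assms(4)
proof (induction w rule: rev_induct)
  case Nil
  then show ?case by (simp add: reach_Nil[OF assms(3)])
next
  case (snoc x v)
  then obtain c where c: "c \<in> reach A f a v" by auto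
  with reach_subset have "reach A f c [x] \<noteq> {}"
    using assms(2) snoc.prems by (fastforce simp: complete_fa_def)
  then show ?case
    using c reach_append[OF fuzzy_automaton_finite[OF assms(1)], of f a v "[x]"] by auto
qed

text \<open>Directability and completeness transfer along any map \<open>\<phi>\<close> from a nonempty set \<open>A'\<close> of
  states onto \<open>B\<close> that maps reachable sets onto reachable sets; a subautomaton is the case of the
  identity on \<open>A' = B\<close>, an epimorphism the case \<open>A' = A\<close>.\<close>

lemma directing_transfer:
  assumes "i \<in> {1, 2, 3}" "directing i A f w" "\<phi> ` A' = B" "A' \<subseteq> A" "A' \<noteq> {}"
    and reach_eq: "\<And>a. a \<in> A' \<Longrightarrow> reach B g (\<phi> a) w = \<phi> ` reach A f a w"
  shows "directing i B g w"
proof -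
  obtain a0 where a0: "a0 \<in> A'" "a0 \<in> A" using assms(4,5) by auto
  have in_B: "\<phi> c \<in> B" if "c \<in> reach A f a0 w" for c
  proof -
    have "\<phi> c \<in> reach B g (\<phi> a0) w" using that by (simp add: reach_eq[OF a0(1)])
    then show ?thesis using reach_subset by fast
  qed
  have preimage: "\<exists>a. a \<in> A' \<and> a \<in> A \<and> b = \<phi> a" if "b \<in> B" for b
    using that assms(3,4) by auto
  consider "i = 1" | "i = 2" | "i = 3" using assms(1) by blast
  then show ?thesis
  proof cases
    case 1
    then obtain c where c: "\<forall>a\<in>A. reach A f a w = {c}"
      using assms(2) by (auto simp: directing_def D1_directing_def)
    have "reach B g b w = {\<phi> c}" if b: "b \<in> B" for b
    proof -
      obtain a where "a \<in> A'" "a \<in> A" "b = \<phi> a" using preimage[OF b] by blast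
      then show ?thesis using reach_eq c by simp
    qed
    moreover have "\<phi> c \<in> B"
      using in_B c a0(2) by simp
    ultimately show ?thesis
      using 1 by (auto simp: directing_def D1_directing_def)
  next
    case 2
    then have D2: "D2_directing A f w" using assms(2) by (simp add: directing_def)
    have "reach B g b w = reach B g b' w" if b: "b \<in> B" "b' \<in> B" for b b'
    proof -
      obtain a where a: "a \<in> A'" "a \<in> A" "b = \<phi> a" using preimage[OF b(1)] by blast
      obtain a' where a': "a' \<in> A'" "a' \<in> A" "b' = \<phi> a'" using preimage[OF b(2)] by blast
      \<comment> \<open>the D2 equations are permutative, so they are instantiated here rather than given to simp\<close>
      have "reach A f a w = reach A f a' w"
        using D2 a(2) a'(2) unfolding D2_directing_def by blast
      then show ?thesis
        by (simp only: a(3) a'(3) reach_eq[OF a(1)] reach_eq[OF a'(1)])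
    qed
    then have "D2_directing B g w" unfolding D2_directing_def by blast
    then show ?thesis using 2 by (simp add: directing_def)
  next
    case 3
    then obtain c where c: "\<forall>a\<in>A. c \<in> reach A f a w"
      using assms(2) by (auto simp: directing_def D3_directing_def)
    have "\<phi> c \<in> reach B g b w" if b: "b \<in> B" for b
    proof -
      obtain a where "a \<in> A'" "a \<in> A" "b = \<phi> a" using preimage[OF b] by blast
      then show ?thesis using reach_eq c by simp
    qed
    moreover have "\<phi> c \<in> B"
      using in_B c a0(2) by simp
    ultimately show ?thesis
      using 3 by (auto simp: directing_def D3_directing_def)
  qed
qed

lemma directable_transfer:
  assumes "i \<in> {1, 2, 3}" "directable i A X f" "\<phi> ` A' = B" "A' \<subseteq> A" "A' \<noteq> {}"
    and reach_eq: "\<And>a w. a \<in> A' \<Longrightarrow> w \<in> lists X \<Longrightarrow> reach B g (\<phi> a) w = \<phi> ` reach A f a w"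
  shows "directable i B X g"
proof -
  obtain w where w: "w \<in> lists X" "directing i A f w"
    using assms(2) by (auto simp: directable_def)
  have "directing i B g w"
    using directing_transfer[OF assms(1) w(2) assms(3-5) reach_eq[OF _ w(1)]] .
  then show ?thesis
    using w(1) by (auto simp: directable_def)
qed

lemma complete_fa_transfer:
  assumes "complete_fa A X f" "\<phi> ` A' = B" "A' \<subseteq> A"
    and reach_eq: "\<And>a w. a \<in> A' \<Longrightarrow> w \<in> lists X \<Longrightarrow> reach B g (\<phi> a) w = \<phi> ` reach A f a w"
  shows "complete_fa B X g"
  unfolding complete_fa_def
proof (intro ballI)
  fix b x assume "b \<in> B" "x \<in> X"
  then obtain a where "a \<in> A'" "b = \<phi> a" using assms(2) by blast
  then show "reach B g b [x] \<noteq> {}"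
    using reach_eq[of a "[x]"] assms(1,3) \<open>x \<in> X\<close> by (auto simp: complete_fa_def)
qed

lemma fuzzy_automaton_subautomaton:
  assumes "subautomaton B g A X f" "fuzzy_automaton A X f"
  shows "fuzzy_automaton B X g"
  using assms unfolding subautomaton_def fuzzy_automaton_def
  by (metis finite_subset subsetD)

lemma reach_subautomaton:
  assumes "subautomaton B g A X f" "fuzzy_automaton A X f" "b \<in> B" "w \<in> lists X"
  shows "reach B g b w = reach A f b w"
  using assms(4)
proof (induction w rule: rev_induct)
  case Nil
  show ?case
    using assms(1,3) by (auto simp: subautomaton_def reach_Nil)
next
  case (snoc x v)
  have finA: "finite A" "A \<noteq> {}" using fuzzy_automaton_finite[OF assms(2)] .
  have BA: "B \<subseteq> A" "B \<noteq> {}" using assms(1) by (auto simp: subautomaton_def)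
  have finB: "finite B" using finA(1) BA(1) by (rule finite_subset[rotated])
  have IH: "reach B g b v = reach A f b v" using snoc by simp
  have step_eq: "{b'\<in>B. g c x b' > 0} = {b'\<in>A. f c x b' > 0}" if c: "c \<in> B" for c
  proof -
    have x: "x \<in> X" and cA: "c \<in> A" using snoc.prems c BA(1) by auto
    have "reach A f c [x] \<subseteq> B" "\<forall>b'\<in>B. g c x b' = f c x b'"
      using assms(1) c x unfolding subautomaton_def by blast+
    then have "{b'\<in>A. f c x b' > 0} \<subseteq> B" "\<forall>b'\<in>B. g c x b' = f c x b'"
      using reach_single[OF finA cA, of f x] by simp_all
    then show ?thesis using BA(1) by auto
  qed
  have "reach B g b (v @ [x]) = (\<Union>c\<in>reach A f b v. {b'\<in>B. g c x b' > 0})"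
    unfolding reach_snoc[OF finB BA(2)] IH ..
  also have "\<dots> = (\<Union>c\<in>reach A f b v. {b'\<in>A. f c x b' > 0})"
    using step_eq IH reach_subset[of B g b v] by (intro SUP_cong) auto
  also have "\<dots> = reach A f b (v @ [x])"
    using reach_snoc[OF finA, of f b v x] by simp
  finally show ?case .
qed

lemma directable_subautomaton:
  assumes "i \<in> {1, 2, 3}" "subautomaton B g A X f" "fuzzy_automaton A X f" "directable i A X f"
  shows "directable i B X g"
  using assms(2) reach_subautomaton[OF assms(2,3)]
  by (intro directable_transfer[OF assms(1,4), of id B]) (auto simp: subautomaton_def)

lemma complete_fa_subautomaton:
  assumes "subautomaton B g A X f" "fuzzy_automaton A X f" "complete_fa A X f"
  shows "complete_fa B X g"
  using assms(1) reach_subautomaton[OF assms(1,2)]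
  by (intro complete_fa_transfer[OF assms(3), of id B]) (auto simp: subautomaton_def)

lemma epimorphism_eq_Max:
  assumes "epimorphism \<phi> A X f B g" "fuzzy_automaton A X f" "a \<in> A" "x \<in> X" "b \<in> B"
  shows "g (\<phi> a) x b = Max ((\<lambda>a'. f a x a') ` {a'\<in>A. \<phi> a' = b})"
    and "finite {a'\<in>A. \<phi> a' = b}" "{a'\<in>A. \<phi> a' = b} \<noteq> {}"
proof -
  have S: "{f a x a' | a'. a' \<in> A \<and> \<phi> a' = b} = (\<lambda>a'. f a x a') ` {a'\<in>A. \<phi> a' = b}"
    by auto
  show ne: "{a'\<in>A. \<phi> a' = b} \<noteq> {}"
    using assms(1,5) by (auto simp: epimorphism_def)
  show "finite {a'\<in>A. \<phi> a' = b}"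
    using fuzzy_automaton_finite[OF assms(2)] by simp
  have "g (\<phi> a) x b = (let S = {f a x a' | a'. a' \<in> A \<and> \<phi> a' = b} in if S = {} then 0 else Max S)"
    using assms(1,3-5) unfolding epimorphism_def by blast
  then show "g (\<phi> a) x b = Max ((\<lambda>a'. f a x a') ` {a'\<in>A. \<phi> a' = b})"
    using ne unfolding Let_def S by auto
qed

lemma fuzzy_automaton_epimorphism:
  assumes "epimorphism \<phi> A X f B g" "fuzzy_automaton A X f"
  shows "fuzzy_automaton B X g"
proof -
  have B: "B = \<phi> ` A" using assms(1) by (auto simp: epimorphism_def)
  have "0 \<le> g (\<phi> a) x b \<and> g (\<phi> a) x b \<le> 1" if "a \<in> A" "x \<in> X" "b \<in> B" for a x b
  proof -
    note g_eq = epimorphism_eq_Max[OF assms that]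
    have "g (\<phi> a) x b \<in> (\<lambda>a'. f a x a') ` {a'\<in>A. \<phi> a' = b}"
      unfolding g_eq(1) using g_eq(2,3) by (intro Max_in) auto
    then show ?thesis
      using assms(2) that by (auto simp: fuzzy_automaton_def)
  qed
  then show ?thesis
    using assms(2) B by (auto simp: fuzzy_automaton_def)
qed

lemma epimorphism_successors:
  assumes "epimorphism \<phi> A X f B g" "fuzzy_automaton A X f" "a \<in> A" "x \<in> X"
  shows "{b\<in>B. g (\<phi> a) x b > 0} = \<phi> ` {a'\<in>A. f a x a' > 0}"
proof -
  have B: "B = \<phi> ` A" using assms(1) by (auto simp: epimorphism_def)
  have pos: "g (\<phi> a) x b > 0 \<longleftrightarrow> (\<exists>a'\<in>A. \<phi> a' = b \<and> f a x a' > 0)" if "b \<in> B" for b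
    using epimorphism_eq_Max[OF assms that] by (auto simp: Max_gr_iff)
  show ?thesis
  proof (intro set_eqI iffI)
    fix b assume "b \<in> {b\<in>B. g (\<phi> a) x b > 0}"
    then show "b \<in> \<phi> ` {a'\<in>A. f a x a' > 0}" using pos by blast
  next
    fix b assume "b \<in> \<phi> ` {a'\<in>A. f a x a' > 0}"
    then obtain a' where "a' \<in> A" "f a x a' > 0" "b = \<phi> a'" by blast
    moreover from this have "b \<in> B" using B by simp
    ultimately show "b \<in> {b\<in>B. g (\<phi> a) x b > 0}" using pos by blast
  qed
qed

lemma reach_epimorphism:
  assumes "epimorphism \<phi> A X f B g" "fuzzy_automaton A X f" "a \<in> A" "w \<in> lists X"
  shows "reach B g (\<phi> a) w = \<phi> ` reach A f a w"
  using assms(4)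
proof (induction w rule: rev_induct)
  case Nil
  have "\<phi> a \<in> B" using assms(1,3) by (auto simp: epimorphism_def)
  then show ?case by (simp add: reach_Nil assms(3))
next
  case (snoc x v)
  have finA: "finite A" "A \<noteq> {}" using fuzzy_automaton_finite[OF assms(2)] .
  have finB: "finite B" "B \<noteq> {}" using assms(1) finA by (auto simp: epimorphism_def)
  have IH: "reach B g (\<phi> a) v = \<phi> ` reach A f a v" using snoc by simp
  have "reach B g (\<phi> a) (v @ [x]) = (\<Union>d\<in>\<phi> ` reach A f a v. {b\<in>B. g d x b > 0})"
    unfolding reach_snoc[OF finB] IH ..
  also have "\<dots> = (\<Union>c\<in>reach A f a v. \<phi> ` {a'\<in>A. f c x a' > 0})"
    using epimorphism_successors[OF assms(1,2) _, of _ x] snoc.prems reach_subset[of A f a v]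
    by auto
  also have "\<dots> = \<phi> ` reach A f a (v @ [x])"
    using reach_snoc[OF finA, of f a v x] by auto
  finally show ?case .
qed

lemma directable_epimorphism:
  assumes "i \<in> {1, 2, 3}" "epimorphism \<phi> A X f B g" "fuzzy_automaton A X f"
    "directable i A X f"
  shows "directable i B X g"
  using assms(2) fuzzy_automaton_finite[OF assms(3)] reach_epimorphism[OF assms(2,3)]
  by (intro directable_transfer[OF assms(1,4), of \<phi> A]) (auto simp: epimorphism_def)

lemma complete_fa_epimorphism:
  assumes "epimorphism \<phi> A X f B g" "fuzzy_automaton A X f" "complete_fa A X f"
  shows "complete_fa B X g"
  using assms(1) reach_epimorphism[OF assms(1,2)]
  by (intro complete_fa_transfer[OF assms(3), of \<phi> A]) (auto simp: epimorphism_def)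

lemma fuzzy_automaton_prod:
  assumes "fuzzy_automaton A X f" "fuzzy_automaton B X g"
  shows "fuzzy_automaton (A \<times> B) X (prod_trans f g)"
  using assms unfolding fuzzy_automaton_def prod_trans_def by (auto simp: min_def)

lemma reach_prod:
  assumes "fuzzy_automaton A X f" "fuzzy_automaton B X g" "a \<in> A" "b \<in> B"
  shows "reach (A \<times> B) (prod_trans f g) (a, b) w = reach A f a w \<times> reach B g b w"
proof (induction w rule: rev_induct)
  case Nil
  then show ?case using assms by (simp add: reach_Nil)
next
  case (snoc x v)
  have finA: "finite A" "A \<noteq> {}" using fuzzy_automaton_finite[OF assms(1)] .
  have finB: "finite B" "B \<noteq> {}" using fuzzy_automaton_finite[OF assms(2)] .
  have finP: "finite (A \<times> B)" "A \<times> B \<noteq> {}" using finA finB by auto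
  have "reach (A \<times> B) (prod_trans f g) (a, b) (v @ [x]) =
      (\<Union>p\<in>reach A f a v \<times> reach B g b v. {q\<in>A \<times> B. prod_trans f g p x q > 0})"
    unfolding reach_snoc[OF finP] snoc ..
  also have "\<dots> = (\<Union>c\<in>reach A f a v. {q\<in>A. f c x q > 0}) \<times> (\<Union>d\<in>reach B g b v. {q\<in>B. g d x q > 0})"
    unfolding prod_trans_def by auto
  also have "\<dots> = reach A f a (v @ [x]) \<times> reach B g b (v @ [x])"
    using reach_snoc[OF finA, of f a v x] reach_snoc[OF finB, of g b v x] by simp
  finally show ?case .
qed

lemma complete_fa_prod:
  assumes "fuzzy_automaton A X f" "fuzzy_automaton B X g" "complete_fa A X f" "complete_fa B X g"
  shows "complete_fa (A \<times> B) X (prod_trans f g)"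
  unfolding complete_fa_def
proof (intro ballI)
  fix p x assume "p \<in> A \<times> B" "x \<in> X"
  moreover obtain a b where "p = (a, b)" by fastforce
  ultimately show "reach (A \<times> B) (prod_trans f g) p [x] \<noteq> {}"
    using reach_prod[OF assms(1,2), of a b "[x]"] assms(3,4) by (auto simp: complete_fa_def)
qed

lemma directing_prod:
  assumes "i \<in> {1, 2, 3}" "fuzzy_automaton A X f" "fuzzy_automaton B X g"
    "directing i A f w" "directing i B g w"
  shows "directing i (A \<times> B) (prod_trans f g) w"
proof -
  have R: "\<And>a b. a \<in> A \<Longrightarrow> b \<in> B \<Longrightarrow>
      reach (A \<times> B) (prod_trans f g) (a, b) w = reach A f a w \<times> reach B g b w"
    using reach_prod[OF assms(2,3)] .
  consider "i = 1" | "i = 2" | "i = 3" using assms(1) by auto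
  then show ?thesis
  proof cases
    case 1
    then obtain c d where "c \<in> A" "\<forall>a\<in>A. reach A f a w = {c}" "d \<in> B" "\<forall>b\<in>B. reach B g b w = {d}"
      using assms(4,5) by (auto simp: directing_def D1_directing_def)
    then show ?thesis
      using 1 R by (auto simp: directing_def D1_directing_def)
  next
    case 2
    then have D2: "D2_directing A f w" "D2_directing B g w"
      using assms(4,5) by (simp_all add: directing_def)
    have "reach (A \<times> B) (prod_trans f g) p w = reach (A \<times> B) (prod_trans f g) q w"
      if pq: "p \<in> A \<times> B" "q \<in> A \<times> B" for p q
    proof -
      obtain a b a' b' where ab: "p = (a, b)" "q = (a', b')" "a \<in> A" "b \<in> B" "a' \<in> A" "b' \<in> B"
        using pq by auto
      have "reach A f a w = reach A f a' w" "reach B g b w = reach B g b' w"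
        using D2 ab(3-6) unfolding D2_directing_def by blast+
      then show ?thesis
        by (simp only: ab(1,2) R[OF ab(3,4)] R[OF ab(5,6)])
    qed
    then have "D2_directing (A \<times> B) (prod_trans f g) w" unfolding D2_directing_def by blast
    then show ?thesis using 2 by (simp add: directing_def)
  next
    case 3
    then obtain c d where "c \<in> A" "\<forall>a\<in>A. c \<in> reach A f a w" "d \<in> B" "\<forall>b\<in>B. d \<in> reach B g b w"
      using assms(4,5) by (auto simp: directing_def D3_directing_def)
    then show ?thesis
      using 3 R by (auto simp: directing_def D3_directing_def)
  qed
qed

lemma D2_directing_append:
  assumes "fuzzy_automaton A X f" "complete_fa A X f" "u \<in> lists X" "D2_directing A f w"
  shows "D2_directing A f (u @ w @ v)"
proof -
  have finA: "finite A" "A \<noteq> {}" using fuzzy_automaton_finite[OF assms(1)] .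
  then obtain a0 where a0: "a0 \<in> A" by auto
  have same: "reach A f c (w @ v) = reach A f a0 (w @ v)" if "c \<in> A" for c
    using assms(4) that a0 unfolding D2_directing_def reach_append[OF finA] by metis
  have "reach A f a (u @ w @ v) = reach A f a0 (w @ v)" if "a \<in> A" for a
  proof -
    have "reach A f a (u @ w @ v) = (\<Union>c\<in>reach A f a u. reach A f c (w @ v))"
      by (rule reach_append[OF finA])
    also have "\<dots> = (\<Union>c\<in>reach A f a u. reach A f a0 (w @ v))"
      using same reach_subset[of A f a u] by (intro SUP_cong) auto
    also have "\<dots> = reach A f a0 (w @ v)"
      using reach_nonempty[OF assms(1,2) that assms(3)] by simp
    finally show ?thesis .
  qed
  then show ?thesis unfolding D2_directing_def by simp
qed

lemma D3_directing_append:
  assumes "fuzzy_automaton A X f" "complete_fa A X f" "u \<in> lists X" "v \<in> lists X"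
    "D3_directing A f w"
  shows "D3_directing A f (u @ w @ v)"
proof -
  have finA: "finite A" "A \<noteq> {}" using fuzzy_automaton_finite[OF assms(1)] .
  obtain c where c: "c \<in> A" "\<forall>a\<in>A. c \<in> reach A f a w"
    using assms(5) by (auto simp: D3_directing_def)
  obtain d where d: "d \<in> reach A f c v"
    using reach_nonempty[OF assms(1,2) c(1) assms(4)] by auto
  have "d \<in> reach A f a (u @ w @ v)" if a: "a \<in> A" for a
  proof -
    obtain e where e: "e \<in> reach A f a u"
      using reach_nonempty[OF assms(1,2) a assms(3)] by auto
    then have "d \<in> reach A f e (w @ v)"
      using c d reach_subset[of A f a u] unfolding reach_append[OF finA] by blast
    then show ?thesis
      using e unfolding reach_append[OF finA, of f a u "w @ v"] by blast
  qed
  then show ?thesis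
    using d reach_subset[of A f c v] unfolding D3_directing_def by blast
qed

lemma directing_append:
  assumes "i \<in> {2, 3}" "fuzzy_automaton A X f" "complete_fa A X f"
    "u \<in> lists X" "v \<in> lists X" "directing i A f w"
  shows "directing i A f (u @ w @ v)"
  using assms D2_directing_append[OF assms(2-4)] D3_directing_append[OF assms(2-5)]
  by (auto simp: directing_def)

lemma directable_prod:
  assumes "i \<in> {2, 3}" "CFDir i A X f" "CFDir i B X g"
  shows "directable i (A \<times> B) X (prod_trans f g)"
proof -
  have fa: "fuzzy_automaton A X f" "complete_fa A X f" "fuzzy_automaton B X g" "complete_fa B X g"
    using assms(2,3) by (auto simp: CFDir_def)
  obtain w1 where w1: "w1 \<in> lists X" "directing i A f w1"
    using assms(2) by (auto simp: CFDir_def directable_def)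
  obtain w2 where w2: "w2 \<in> lists X" "directing i B g w2"
    using assms(3) by (auto simp: CFDir_def directable_def)
  have "directing i A f (w1 @ w2)"
    using directing_append[OF assms(1) fa(1,2) _ w2(1) w1(2), of "[]"] by simp
  moreover have "directing i B g (w1 @ w2)"
    using directing_append[OF assms(1) fa(3,4) w1(1) _ w2(2), of "[]"] by simp
  ultimately have "directing i (A \<times> B) (prod_trans f g) (w1 @ w2)"
    using assms(1) by (intro directing_prod[OF _ fa(1,3)]) auto
  moreover have "w1 @ w2 \<in> lists X" using w1(1) w2(1) by simp
  ultimately show ?thesis
    unfolding directable_def by blast
qed

theorem proposition6p11:
  fixes A :: "'a set" and X :: "'x set" and f :: "'a \<Rightarrow> 'x \<Rightarrow> 'a \<Rightarrow> real"
    and i :: nat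
  assumes "i \<in> {1, 2, 3}"
  shows
    "(\<forall>B g. FDir i A X f \<and> subautomaton B g A X f \<longrightarrow> FDir i B X g)
   \<and> (\<forall>B g. CFDir i A X f \<and> subautomaton B g A X f \<longrightarrow> CFDir i B X g)
   \<and> (\<forall>(B :: 'b set) g. FDir i A X f \<and> homomorphic_image B g A X f \<longrightarrow> FDir i B X g)
   \<and> (\<forall>(B :: 'b set) g. CFDir i A X f \<and> homomorphic_image B g A X f \<longrightarrow> CFDir i B X g)
   \<and> (i \<in> {2, 3} \<longrightarrow> (\<forall>(B :: 'b set) g. CFDir i A X f \<and> CFDir i B X g
          \<longrightarrow> CFDir i (A \<times> B) X (prod_trans f g)))"
proof (intro conjI allI impI)
  fix B g assume "FDir i A X f \<and> subautomaton B g A X f"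
  then show "FDir i B X g"
    using fuzzy_automaton_subautomaton directable_subautomaton[OF assms] by (auto simp: FDir_def)
next
  fix B g assume "CFDir i A X f \<and> subautomaton B g A X f"
  then show "CFDir i B X g"
    using fuzzy_automaton_subautomaton directable_subautomaton[OF assms] complete_fa_subautomaton
    by (auto simp: CFDir_def)
next
  fix B :: "'b set" and g assume "FDir i A X f \<and> homomorphic_image B g A X f"
  then show "FDir i B X g"
    using fuzzy_automaton_epimorphism directable_epimorphism[OF assms]
    by (auto simp: FDir_def homomorphic_image_def)
next
  fix B :: "'b set" and g assume "CFDir i A X f \<and> homomorphic_image B g A X f"
  then show "CFDir i B X g"
    using fuzzy_automaton_epimorphism directable_epimorphism[OF assms] complete_fa_epimorphism
    by (auto simp: CFDir_def homomorphic_image_def)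
next
  fix B :: "'b set" and g assume "i \<in> {2, 3}" and factors: "CFDir i A X f \<and> CFDir i B X g"
  then have "directable i (A \<times> B) X (prod_trans f g)"
    using directable_prod by blast
  with factors show "CFDir i (A \<times> B) X (prod_trans f g)"
    using fuzzy_automaton_prod complete_fa_prod by (auto simp: CFDir_def)
qed

end
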